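(* Let $G=(V,E)$ be a directed graph with $n=|V|$, $h>0$ a length bound, $1\le\alpha\le\log n$, and $u,v,w\in V$. Then: (1) $\sum_{a\in V}w_h^\alpha(u,a)\le n$; (2) $\sum_{a\in V}w_h^\alpha(u,a)\ge1$; (3) $w_h^\alpha(u,v)\ge 2^{-\alpha\overline{\mathrm{dist}}(u,v)/h}-1/n^2$; (4) $2^{-\alpha\overline{\mathrm{dist}}(w,v)/h}\cdot w_h^\alpha(u,v)-1/n^2\le w_h^\alpha(u,w)\le 2^{\alpha\overline{\mathrm{dist}}(w,v)/h}\cdot\left(w_h^\alpha(u,v)+1/n^2\right)$.
   Context: $G$ has positive integer edge lengths; $\mathrm{dist}(u,v)$ is the directed shortest-path distance ($\infty$ if unreachable) and $\overline{\mathrm{dist}}(u,v)=\mathrm{dist}(u,v)+\mathrm{dist}(v,u)$ (round-trip distance). The $h$-length $\alpha$-exponential distance weight is $w_h^\alpha(u,v)=1$ if $u=v$; $w_h^\alpha(u,v)=2^{-\alpha\overline{\mathrm{dist}}(u,v)/h}$ if $u\ne v$ and $\overline{\mathrm{dist}}(u,v)\le\frac{2h\log_2n}{\alpha}$; and $w_h^\alpha(u,v)=0$ otherwise. *)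

theory Defs
  imports Complex_Main "HOL-Library.Extended_Real"
begin

definition is_walk :: "('a \<times> 'a) set \<Rightarrow> 'a list \<Rightarrow> 'a \<Rightarrow> 'a \<Rightarrow> bool" where
  "is_walk E p u v \<longleftrightarrow> p \<noteq> [] \<and> hd p = u \<and> last p = v \<and> set (zip p (tl p)) \<subseteq> E"

definition walk_len :: "('a \<times> 'a \<Rightarrow> nat) \<Rightarrow> 'a list \<Rightarrow> nat" where
  "walk_len len p = sum_list (map len (zip p (tl p)))"

text \<open>Directed shortest-path distance; \<infinity> if unreachable (Inf of the empty set).\<close>
definition gdist :: "('a \<times> 'a) set \<Rightarrow> ('a \<times> 'a \<Rightarrow> nat) \<Rightarrow> 'a \<Rightarrow> 'a \<Rightarrow> enat" where
  "gdist E len u v = Inf {enat (walk_len len p) | p. is_walk E p u v}"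

definition rtdist :: "('a \<times> 'a) set \<Rightarrow> ('a \<times> 'a \<Rightarrow> nat) \<Rightarrow> 'a \<Rightarrow> 'a \<Rightarrow> enat" where
  "rtdist E len u v = gdist E len u v + gdist E len v u"

definition expdecay :: "real \<Rightarrow> real \<Rightarrow> enat \<Rightarrow> real" where
  "expdecay h \<alpha> d = (case d of enat k \<Rightarrow> 2 powr (- \<alpha> * real k / h) | \<infinity> \<Rightarrow> 0)"

definition expgrowth :: "real \<Rightarrow> real \<Rightarrow> enat \<Rightarrow> ereal" where
  "expgrowth h \<alpha> d = (case d of enat k \<Rightarrow> ereal (2 powr (\<alpha> * real k / h)) | \<infinity> \<Rightarrow> \<infinity>)"

definition expweight :: "'a set \<Rightarrow> ('a \<times> 'a) set \<Rightarrow> ('a \<times> 'a \<Rightarrow> nat) \<Rightarrow> real \<Rightarrow> real \<Rightarrow> 'a \<Rightarrow> 'a \<Rightarrow> real" where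
  "expweight V E len h \<alpha> u v =
     (if u = v then 1
      else (case rtdist E len u v of
              enat d \<Rightarrow> (if real d \<le> 2 * h * log 2 (real (card V)) / \<alpha>
                         then 2 powr (- \<alpha> * real d / h) else 0)
            | \<infinity> \<Rightarrow> 0))"

end

theory Submission
  imports Defs
begin

text \<open>The weight \<open>w(u,a)\<close> never exceeds the exact decay \<open>2 powr (-\<alpha> rtdist(u,a)/h) \<le> 1\<close> and
  differs from it only beyond the cutoff \<open>rtdist(u,a) > 2 h log n / \<alpha>\<close>, where the decay is at most
  \<open>1/n\<^sup>2\<close>; this gives (1)--(3), with the diagonal term \<open>w(u,u) = 1\<close> giving (2). The round-trip
  distance is symmetric and satisfies the triangle inequality, so the decay is supermultiplicative:
  \<open>D(u,v) D(v,w) \<le> D(u,w)\<close>. Bounding one weight by its decay and the other from below by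
  decay minus \<open>1/n\<^sup>2\<close> yields both sides of (4).\<close>

lemma zip_tl_append_tl:
  assumes "p \<noteq> []" "q \<noteq> []" "last p = hd q"
  shows "zip (p @ tl q) (tl (p @ tl q)) = zip p (tl p) @ zip q (tl q)"
  using assms
proof (induction p rule: induct_list012)
  case (2 x) then show ?case by (cases q) auto
qed auto

lemma is_walk_append:
  assumes "is_walk E p u v" "is_walk E q v w"
  shows "is_walk E (p @ tl q) u w"
    and "walk_len len (p @ tl q) = walk_len len p + walk_len len q"
proof -
  have ne: "p \<noteq> []" "q \<noteq> []" "last p = hd q" using assms by (auto simp: is_walk_def)
  note zip = zip_tl_append_tl[OF ne]
  show "is_walk E (p @ tl q) u w" using assms ne zip unfolding is_walk_def by (cases q) auto
  show "walk_len len (p @ tl q) = walk_len len p + walk_len len q" unfolding walk_len_def zip by simp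
qed

lemma gdist_le_walk_len: "is_walk E p u v \<Longrightarrow> gdist E len u v \<le> enat (walk_len len p)"
  unfolding gdist_def by (rule Inf_lower) blast

lemma gdist_self: "gdist E len u u = 0"
proof -
  have "is_walk E [u] u u" by (simp add: is_walk_def)
  from gdist_le_walk_len[OF this, of len] show ?thesis
    by (simp add: walk_len_def zero_enat_def[symmetric])
qed

lemma gdist_attained:
  assumes "gdist E len u v \<noteq> \<infinity>"
  obtains p where "is_walk E p u v" "gdist E len u v = enat (walk_len len p)"
proof -
  let ?S = "{enat (walk_len len p) | p. is_walk E p u v}"
  have "?S \<noteq> {}"
  proof
    assume "?S = {}"
    then show False using assms by (simp add: gdist_def top_enat_def)
  qed
  then obtain d where "d \<in> ?S" by blast
  then have "gdist E len u v \<in> ?S" unfolding gdist_def by (rule wellorder_InfI)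
  then show ?thesis using that by blast
qed

lemma gdist_triangle: "gdist E len u w \<le> gdist E len u v + gdist E len v w"
proof (cases "gdist E len u v = \<infinity> \<or> gdist E len v w = \<infinity>")
  case False
  then obtain p q where p: "is_walk E p u v" "gdist E len u v = enat (walk_len len p)"
    and q: "is_walk E q v w" "gdist E len v w = enat (walk_len len q)"
    by (metis gdist_attained)
  have "gdist E len u w \<le> enat (walk_len len (p @ tl q))"
    by (rule gdist_le_walk_len[OF is_walk_append(1)[OF p(1) q(1)]])
  then show ?thesis using p(2) q(2) by (simp add: is_walk_append(2)[OF p(1) q(1)])
qed auto

lemma rtdist_commute: "rtdist E len u v = rtdist E len v u"
  by (simp add: rtdist_def add.commute)

lemma rtdist_self: "rtdist E len u u = 0"
  by (simp add: rtdist_def gdist_self)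

lemma rtdist_triangle: "rtdist E len u w \<le> rtdist E len u v + rtdist E len v w"
proof -
  have "rtdist E len u w
      \<le> (gdist E len u v + gdist E len v w) + (gdist E len w v + gdist E len v u)"
    unfolding rtdist_def by (intro add_mono gdist_triangle)
  also have "\<dots> = rtdist E len u v + rtdist E len v w" by (simp add: rtdist_def ac_simps)
  finally show ?thesis .
qed

lemma expdecay_nonneg: "expdecay h \<alpha> d \<ge> 0"
  by (cases d) (auto simp: expdecay_def)

lemma expdecay_le_1:
  assumes "h > 0" "\<alpha> \<ge> 0"
  shows "expdecay h \<alpha> d \<le> 1"
proof (cases d)
  case (enat k)
  have "- \<alpha> * real k / h \<le> 0" using assms by (simp add: divide_nonpos_pos)
  then have "2 powr (- \<alpha> * real k / h) \<le> 2 powr 0" by (subst powr_le_cancel_iff) simp_all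
  then show ?thesis using enat by (simp add: expdecay_def)
qed (simp add: expdecay_def)

lemma expdecay_add: "expdecay h \<alpha> (a + b) = expdecay h \<alpha> a * expdecay h \<alpha> b"
proof (cases a; cases b)
  fix k m assume "a = enat k" "b = enat m"
  moreover have "2 powr (- \<alpha> * real (k + m) / h)
      = 2 powr (- \<alpha> * real k / h) * 2 powr (- \<alpha> * real m / h)"
    unfolding powr_add[symmetric] by (simp add: divide_inverse algebra_simps)
  ultimately show ?thesis by (simp add: expdecay_def)
qed (auto simp: expdecay_def)

lemma expdecay_antimono:
  assumes "h > 0" "\<alpha> \<ge> 0" "a \<le> b"
  shows "expdecay h \<alpha> b \<le> expdecay h \<alpha> a"
proof (cases a; cases b)
  fix k m assume km: "a = enat k" "b = enat m"
  then have "- \<alpha> * real m / h \<le> - \<alpha> * real k / h"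
    using assms by (intro divide_right_mono) (auto intro: mult_left_mono)
  then show ?thesis using km by (simp add: expdecay_def)
qed (use assms in \<open>auto simp: expdecay_def expdecay_nonneg\<close>)

lemma expdecay_rtdist_mult_le:
  assumes "h > 0" "\<alpha> \<ge> 0"
  shows "expdecay h \<alpha> (rtdist E len u v) * expdecay h \<alpha> (rtdist E len v w)
           \<le> expdecay h \<alpha> (rtdist E len u w)"
  using expdecay_antimono[OF assms rtdist_triangle] by (simp add: expdecay_add)

lemma le_expgrowth_mult:
  assumes "y > 0" "expdecay h \<alpha> d * x \<le> y"
  shows "ereal x \<le> expgrowth h \<alpha> d * ereal y"
proof (cases d)
  case (enat k)
  let ?g = "2 powr (\<alpha> * real k / h)"
  have "?g * 2 powr (- \<alpha> * real k / h) = 1" by (subst powr_add[symmetric]) simp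
  then have "x = ?g * (2 powr (- \<alpha> * real k / h) * x)" by (simp only: mult.assoc[symmetric])
  also have "\<dots> \<le> ?g * y"
    using assms(2) enat by (intro mult_left_mono) (simp_all add: expdecay_def)
  finally show ?thesis using enat by (simp add: expgrowth_def)
qed (use assms(1) in \<open>simp add: expgrowth_def\<close>)

lemma two_powr_le_inverse_square_beyond_cutoff:
  fixes n d :: real
  assumes "n > 0" "h > 0" "\<alpha> > 0" "2 * h * log 2 n / \<alpha> < d"
  shows "2 powr (- \<alpha> * d / h) \<le> 1 / n ^ 2"
proof -
  have "2 * h * log 2 n < d * \<alpha>" using assms(3,4) by (simp add: divide_less_eq)
  then have "2 * log 2 n < \<alpha> * d / h" using assms(2) by (simp add: less_divide_eq ac_simps)
  then have "2 powr (- \<alpha> * d / h) \<le> 2 powr (- (2 * log 2 n))" by simp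
  also have "\<dots> = inverse ((2 powr log 2 n) powr 2)" by (simp add: powr_powr powr_minus mult.commute)
  also have "\<dots> = 1 / n ^ 2" using assms(1) by (simp add: powr_numeral divide_inverse)
  finally show ?thesis .
qed

lemma expweight_self: "expweight V E len h \<alpha> u u = 1"
  by (simp add: expweight_def)

lemma expweight_nonneg: "expweight V E len h \<alpha> u a \<ge> 0"
  by (auto simp: expweight_def split: enat.split)

lemma expweight_le_expdecay: "expweight V E len h \<alpha> u a \<le> expdecay h \<alpha> (rtdist E len u a)"
  by (auto simp: expweight_def expdecay_def rtdist_self zero_enat_def split: enat.split)

lemma expweight_le_1:
  assumes "h > 0" "\<alpha> \<ge> 0"
  shows "expweight V E len h \<alpha> u a \<le> 1"
  using expweight_le_expdecay expdecay_le_1[OF assms] order_trans by metis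

lemma expdecay_le_expweight_plus:
  assumes "h > 0" "\<alpha> > 0" "card V > 0"
  shows "expdecay h \<alpha> (rtdist E len u a) \<le> expweight V E len h \<alpha> u a + 1 / real (card V) ^ 2"
  using two_powr_le_inverse_square_beyond_cutoff[of "real (card V)" h \<alpha>] assms
  by (auto simp: expweight_def expdecay_def rtdist_self zero_enat_def not_le
      intro: add_increasing split: enat.split)

lemma expdecay_mult_expweight_le:
  assumes "h > 0" "\<alpha> \<ge> 0"
  shows "expdecay h \<alpha> (rtdist E len v w) * expweight V E len h \<alpha> u v
           \<le> expdecay h \<alpha> (rtdist E len u w)"
proof -
  have "expdecay h \<alpha> (rtdist E len v w) * expweight V E len h \<alpha> u v
      \<le> expdecay h \<alpha> (rtdist E len u v) * expdecay h \<alpha> (rtdist E len v w)"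
    by (subst mult.commute) (intro mult_right_mono expweight_le_expdecay expdecay_nonneg)
  also have "\<dots> \<le> expdecay h \<alpha> (rtdist E len u w)" by (rule expdecay_rtdist_mult_le[OF assms])
  finally show ?thesis .
qed

theorem lemma3p11:
  fixes V :: "'a set" and E :: "('a \<times> 'a) set" and len :: "'a \<times> 'a \<Rightarrow> nat"
    and h \<alpha> :: real and u v w :: 'a
  assumes "finite V" and "E \<subseteq> V \<times> V" and "\<forall>e\<in>E. len e > 0"
    and "h > 0" and "1 \<le> \<alpha>" and "\<alpha> \<le> log 2 (real (card V))"
    and "u \<in> V" and "v \<in> V" and "w \<in> V"
  shows "(\<Sum>a\<in>V. expweight V E len h \<alpha> u a) \<le> real (card V) \<and>
         (\<Sum>a\<in>V. expweight V E len h \<alpha> u a) \<ge> 1 \<and>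
         expweight V E len h \<alpha> u v \<ge> expdecay h \<alpha> (rtdist E len u v) - 1 / real (card V) ^ 2 \<and>
         expdecay h \<alpha> (rtdist E len w v) * expweight V E len h \<alpha> u v - 1 / real (card V) ^ 2
           \<le> expweight V E len h \<alpha> u w \<and>
         ereal (expweight V E len h \<alpha> u w)
           \<le> expgrowth h \<alpha> (rtdist E len w v) * ereal (expweight V E len h \<alpha> u v + 1 / real (card V) ^ 2)"
proof -
  let ?w = "expweight V E len h \<alpha>" and ?D = "expdecay h \<alpha>" and ?r = "rtdist E len"
  have n: "card V > 0" using assms(1,7) card_gt_0_iff by blast
  have \<alpha>: "\<alpha> > 0" "\<alpha> \<ge> 0" using assms(5) by auto
  note decay_le = expdecay_le_expweight_plus[OF assms(4) \<alpha>(1) n, of E len u]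
  have "(\<Sum>a\<in>V. ?w u a) \<le> (\<Sum>a\<in>V. 1)" by (intro sum_mono expweight_le_1 assms(4) \<alpha>(2))
  moreover have "?w u u \<le> (\<Sum>a\<in>V. ?w u a)"
    using assms(1,7) by (intro member_le_sum expweight_nonneg)
  moreover have "?D (?r w v) * ?w u v \<le> ?D (?r u w)"
    using expdecay_mult_expweight_le[OF assms(4) \<alpha>(2)] by (simp add: rtdist_commute[of E len w v])
  moreover have "?D (?r w v) * ?w u w \<le> ?D (?r u v)"
    by (rule expdecay_mult_expweight_le[OF assms(4) \<alpha>(2)])
  moreover have "?w u v + 1 / real (card V) ^ 2 > 0"
    using n by (intro add_nonneg_pos expweight_nonneg) simp
  ultimately show ?thesis
    using decay_le[of v] decay_le[of w]
    by (auto simp: expweight_self intro!: le_expgrowth_mult)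
qed

end
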